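(* Let $(X,d)$ be a uniformly locally finite metric space and let $h,k\colon X\to\mathbb{R}$ be arbitrary maps. Regard $h$ and $k$ as (possibly unbounded) self-adjoint multiplication operators on $\ell_2(X)$ and let $\sigma_h,\sigma_k$ be the pre-flows on $\mathrm{C}^*_u(X)$ given by $\sigma_{h,t}(a)=e^{ith}ae^{-ith}$ and $\sigma_{k,t}(a)=e^{itk}ae^{-itk}$. The following are equivalent: (1) $h$ and $k$ are close, i.e. $\sup_{x\in X}|h_x-k_x|<\infty$; (2) the pre-flows $\sigma_h$ and $\sigma_k$ are inner perturbations of each other; (3) the pre-flows $\sigma_h$ and $\sigma_k$ are cocycle perturbations of each other.
   Context: A metric space is uniformly locally finite if $\sup_x|B_r(x)|<\infty$ for each $r>0$. A partial translation is a bijection $f\colon\mathrm{dom}(f)\subseteq X\to\mathrm{ran}(f)\subseteq X$ with $\sup_{x\in\mathrm{dom}(f)}d(x,f(x))<\infty$; $v_f\delta_x=\delta_{f(x)}$ for $x\in\mathrm{dom}(f)$, $v_f\delta_x=0$ otherwise; $\mathrm{C}^*_u(X)$ is the $\mathrm{C}^*$-subalgebra of $\mathcal{B}(\ell_2(X))$ generated by all $v_f$. The multiplication operator of $h$ has domain $\{\xi:\sum_x|h_x\xi_x|^2<\infty\}$ and acts by $(h\xi)_x=h_x\xi_x$. A pre-flow on a unital $\mathrm{C}^*$-algebra $A$ is a group homomorphism $\sigma\colon\mathbb{R}\to\mathrm{Aut}(A)$. A cocycle for $\sigma$ is a norm-continuous family of unitaries $(u_t)_{t\in\mathbb{R}}$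 in $A$ with $u_{t+s}=u_t\sigma_t(u_s)$ for all $t,s$; then $\rho_t(a)=u_t\sigma_t(a)u_t^*$ defines a cocycle perturbation $\rho$ of $\sigma$; if moreover such a cocycle can be chosen differentiable at $0$, $\rho$ is an inner perturbation of $\sigma$. *)

theory Defs
  imports "HOL-Analysis.Analysis"
begin

text \<open>Bounded operators on l2(X) are represented by their matrices
  m x y = (T delta_y)_x, acting by (m xi)_x = sum_y m x y * xi y.\<close>

type_synonym 'a mat = "'a \<Rightarrow> 'a \<Rightarrow> complex"

definition uniformly_locally_finite :: "'a::metric_space set \<Rightarrow> bool" where
  "uniformly_locally_finite X \<longleftrightarrow>
     (\<forall>r>0. \<exists>N::nat. \<forall>x\<in>X. finite (cball x r \<inter> X) \<and> card (cball x r \<inter> X) \<le> N)"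

definition ell2 :: "('a \<Rightarrow> complex) set" where
  "ell2 = {\<xi>. (\<lambda>x. (cmod (\<xi> x))\<^sup>2) summable_on UNIV}"

definition l2norm :: "('a \<Rightarrow> complex) \<Rightarrow> real" where
  "l2norm \<xi> = sqrt (\<Sum>\<^sub>\<infinity>x. (cmod (\<xi> x))\<^sup>2)"

definition mat_apply :: "'a mat \<Rightarrow> ('a \<Rightarrow> complex) \<Rightarrow> ('a \<Rightarrow> complex)" where
  "mat_apply m \<xi> = (\<lambda>x. \<Sum>\<^sub>\<infinity>y. m x y * \<xi> y)"

definition bounded_mat :: "'a mat \<Rightarrow> bool" where
  "bounded_mat m \<longleftrightarrow> (\<exists>C. \<forall>\<xi>\<in>ell2. (\<forall>x. (\<lambda>y. m x y * \<xi> y) summable_on UNIV)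
        \<and> mat_apply m \<xi> \<in> ell2 \<and> l2norm (mat_apply m \<xi>) \<le> C * l2norm \<xi>)"

definition opnorm :: "'a mat \<Rightarrow> real" where
  "opnorm m = Sup ((\<lambda>\<xi>. l2norm (mat_apply m \<xi>)) ` {\<xi>\<in>ell2. l2norm \<xi> \<le> 1})"

definition mat_mult :: "'a mat \<Rightarrow> 'a mat \<Rightarrow> 'a mat" where
  "mat_mult m n = (\<lambda>x z. \<Sum>\<^sub>\<infinity>y. m x y * n y z)"

definition mat_adj :: "'a mat \<Rightarrow> 'a mat" where
  "mat_adj m = (\<lambda>x y. cnj (m y x))"

definition mat_add :: "'a mat \<Rightarrow> 'a mat \<Rightarrow> 'a mat" where
  "mat_add m n = (\<lambda>x y. m x y + n x y)"

definition mat_diff :: "'a mat \<Rightarrow> 'a mat \<Rightarrow> 'a mat" where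
  "mat_diff m n = (\<lambda>x y. m x y - n x y)"

definition mat_scale :: "complex \<Rightarrow> 'a mat \<Rightarrow> 'a mat" where
  "mat_scale c m = (\<lambda>x y. c * m x y)"

definition mat_id :: "'a mat" where
  "mat_id = (\<lambda>x y. if x = y then 1 else 0)"

definition unitary_mat :: "'a mat \<Rightarrow> bool" where
  "unitary_mat u \<longleftrightarrow> bounded_mat u \<and> mat_mult u (mat_adj u) = mat_id \<and> mat_mult (mat_adj u) u = mat_id"

definition partial_translation :: "'a::metric_space set \<Rightarrow> ('a \<Rightarrow> 'a) \<Rightarrow> bool" where
  "partial_translation D f \<longleftrightarrow> inj_on f D \<and> (\<exists>C. \<forall>x\<in>D. dist x (f x) \<le> C)"

definition v_op :: "'a set \<Rightarrow> ('a \<Rightarrow> 'a) \<Rightarrow> 'a mat" where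
  "v_op D f = (\<lambda>x y. if y \<in> D \<and> f y = x then 1 else 0)"

inductive_set uniform_roe :: "'a::metric_space mat set" where
  gen: "partial_translation D f \<Longrightarrow> v_op D f \<in> uniform_roe"
| add: "a \<in> uniform_roe \<Longrightarrow> b \<in> uniform_roe \<Longrightarrow> mat_add a b \<in> uniform_roe"
| scale: "a \<in> uniform_roe \<Longrightarrow> mat_scale c a \<in> uniform_roe"
| mult: "a \<in> uniform_roe \<Longrightarrow> b \<in> uniform_roe \<Longrightarrow> mat_mult a b \<in> uniform_roe"
| adj: "a \<in> uniform_roe \<Longrightarrow> mat_adj a \<in> uniform_roe"
| lim: "(\<And>n. s n \<in> uniform_roe) \<Longrightarrow> bounded_mat a \<Longrightarrow>
        (\<lambda>n. opnorm (mat_diff (s n) a)) \<longlonglongrightarrow> 0 \<Longrightarrow> a \<in> uniform_roe"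

definition mult_flow :: "('a \<Rightarrow> real) \<Rightarrow> real \<Rightarrow> 'a mat \<Rightarrow> 'a mat" where
  "mult_flow h t a = (\<lambda>x y. exp (\<i> * of_real (t * h x)) * a x y * exp (- \<i> * of_real (t * h y)))"

definition norm_continuous :: "(real \<Rightarrow> 'a mat) \<Rightarrow> bool" where
  "norm_continuous u \<longleftrightarrow> (\<forall>t. ((\<lambda>s. opnorm (mat_diff (u s) (u t))) \<longlongrightarrow> 0) (at t))"

definition is_cocycle :: "'a mat set \<Rightarrow> (real \<Rightarrow> 'a mat \<Rightarrow> 'a mat) \<Rightarrow> (real \<Rightarrow> 'a mat) \<Rightarrow> bool" where
  "is_cocycle A \<sigma> u \<longleftrightarrow> (\<forall>t. u t \<in> A \<and> unitary_mat (u t)) \<and> norm_continuous u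
      \<and> (\<forall>t s. u (t + s) = mat_mult (u t) (\<sigma> t (u s)))"

definition norm_differentiable_at_0 :: "(real \<Rightarrow> 'a mat) \<Rightarrow> bool" where
  "norm_differentiable_at_0 u \<longleftrightarrow> (\<exists>D. bounded_mat D \<and>
     ((\<lambda>t. opnorm (mat_diff (mat_scale (complex_of_real (1 / t)) (mat_diff (u t) (u 0))) D)) \<longlongrightarrow> 0) (at 0))"

definition perturbed_by :: "'a mat set \<Rightarrow> (real \<Rightarrow> 'a mat \<Rightarrow> 'a mat) \<Rightarrow> (real \<Rightarrow> 'a mat \<Rightarrow> 'a mat) \<Rightarrow> (real \<Rightarrow> 'a mat) \<Rightarrow> bool" where
  "perturbed_by A \<rho> \<sigma> u \<longleftrightarrow> (\<forall>t. \<forall>a\<in>A. \<rho> t a = mat_mult (mat_mult (u t) (\<sigma> t a)) (mat_adj (u t)))"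

definition cocycle_perturbation :: "'a mat set \<Rightarrow> (real \<Rightarrow> 'a mat \<Rightarrow> 'a mat) \<Rightarrow> (real \<Rightarrow> 'a mat \<Rightarrow> 'a mat) \<Rightarrow> bool" where
  "cocycle_perturbation A \<rho> \<sigma> \<longleftrightarrow> (\<exists>u. is_cocycle A \<sigma> u \<and> perturbed_by A \<rho> \<sigma> u)"

definition inner_perturbation :: "'a mat set \<Rightarrow> (real \<Rightarrow> 'a mat \<Rightarrow> 'a mat) \<Rightarrow> (real \<Rightarrow> 'a mat \<Rightarrow> 'a mat) \<Rightarrow> bool" where
  "inner_perturbation A \<rho> \<sigma> \<longleftrightarrow>
     (\<exists>u. is_cocycle A \<sigma> u \<and> norm_differentiable_at_0 u \<and> perturbed_by A \<rho> \<sigma> u)"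

end

theory Submission
  imports Defs "HOL-Probability.Characteristic_Functions"
begin

text \<open>If \<open>\<phi> = h - k\<close> is bounded, the diagonal unitaries \<open>u\<^sub>t = exp (i t \<phi>)\<close> form the required
  cocycle: they lie in the uniform Roe algebra (a bounded diagonal operator is a norm limit of
  diagonal operators of finite range, i.e. of finite linear combinations of the projections
  \<open>v\<^sub>f\<close> with \<open>f = id\<close> on \<open>D\<close>), they satisfy the cocycle identity because \<open>\<sigma>\<^sub>k\<close> fixes diagonal
  operators, they conjugate \<open>\<sigma>\<^sub>k\<close> into \<open>\<sigma>\<^sub>h\<close>, and they are norm differentiable with derivative
  \<open>i \<phi>\<close>.

  Conversely, if a cocycle \<open>u\<close> conjugates \<open>\<sigma>\<^sub>k\<close> into \<open>\<sigma>\<^sub>h\<close>, evaluating both flows on the matrix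
  units \<open>e\<^sub>x\<^sub>y = v\<^sub>f\<close>, \<open>f : y \<mapsto> x\<close>, forces \<open>u\<^sub>t\<close> to be diagonal with
  \<open>u\<^sub>t(x) \<cdot> cnj (u\<^sub>t(y)) = exp (i t (\<phi> x - \<phi> y))\<close>. Norm continuity at \<open>0\<close> gives \<open>\<delta> > 0\<close> such that
  \<open>|exp (i s (\<phi> x - \<phi> y)) - 1| < 1\<close> for \<open>0 < |s| < \<delta>\<close>; as \<open>exp (i \<pi>) = -1\<close>, this forces
  \<open>|\<phi> x - \<phi> y| \<le> \<pi> / \<delta>\<close>.\<close>

section \<open>Diagonal operators\<close>


definition diag_mat :: "('a \<Rightarrow> complex) \<Rightarrow> 'a mat" where
  "diag_mat d = (\<lambda>x y. if x = y then d x else 0)"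

lemma has_sum_single_point:
  "((\<lambda>y. if y = c then a else 0) has_sum (a::'b::{comm_monoid_add,topological_space})) UNIV"
proof -
  have "((\<lambda>y. if y = c then a else 0) has_sum a) {c}"
    using has_sum_finite[of "{c}" "\<lambda>y. if y = c then a else 0"] by simp
  then show ?thesis
    by (rule has_sum_cong_neutral[THEN iffD1, rotated -1]) auto
qed

lemma infsum_single_point:
  "(\<Sum>\<^sub>\<infinity>y. if y = c then a else 0) = (a::'b::{comm_monoid_add,t2_space})"
  by (rule infsumI[OF has_sum_single_point])

lemma summable_on_single_point:
  "(\<lambda>y. if y = c then (a::'b::{comm_monoid_add,topological_space}) else 0) summable_on UNIV"
  by (rule has_sum_imp_summable[OF has_sum_single_point])

lemma diag_mat_row: "(\<lambda>y. diag_mat d x y * \<xi> y) = (\<lambda>y. if y = x then d x * \<xi> x else 0)"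
  by (auto simp: diag_mat_def)

lemma mat_apply_diag_mat: "mat_apply (diag_mat d) \<xi> = (\<lambda>x. d x * \<xi> x)"
  by (simp add: mat_apply_def diag_mat_row infsum_single_point)

lemma ell2_mult_bounded:
  assumes "\<xi> \<in> ell2" and "\<And>x. cmod (d x) \<le> C"
  shows "(\<lambda>x. d x * \<xi> x) \<in> ell2" and "l2norm (\<lambda>x. d x * \<xi> x) \<le> C * l2norm \<xi>"
proof -
  have "0 \<le> C" using assms(2) norm_ge_zero order_trans by blast
  have \<xi>: "(\<lambda>x. (cmod (\<xi> x))\<^sup>2) summable_on UNIV" using assms(1) by (simp add: ell2_def)
  then have C\<xi>: "(\<lambda>x. C\<^sup>2 * (cmod (\<xi> x))\<^sup>2) summable_on UNIV"
    by (rule summable_on_cmult_right)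
  have le: "(cmod (d x * \<xi> x))\<^sup>2 \<le> C\<^sup>2 * (cmod (\<xi> x))\<^sup>2" for x
  proof -
    have "cmod (d x * \<xi> x) \<le> C * cmod (\<xi> x)"
      by (simp add: norm_mult assms(2) mult_right_mono)
    then show ?thesis by (metis norm_ge_zero power_mono power_mult_distrib)
  qed
  have d\<xi>: "(\<lambda>x. (cmod (d x * \<xi> x))\<^sup>2) summable_on UNIV"
    by (rule summable_on_comparison_test[OF C\<xi>]) (auto simp: le)
  then show "(\<lambda>x. d x * \<xi> x) \<in> ell2" by (simp add: ell2_def)
  have "(\<Sum>\<^sub>\<infinity>x. (cmod (d x * \<xi> x))\<^sup>2) \<le> (\<Sum>\<^sub>\<infinity>x. C\<^sup>2 * (cmod (\<xi> x))\<^sup>2)"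
    by (rule infsum_mono[OF d\<xi> C\<xi> le])
  also have "\<dots> = C\<^sup>2 * (\<Sum>\<^sub>\<infinity>x. (cmod (\<xi> x))\<^sup>2)"
    by (rule infsum_cmult_right) (use \<xi> in auto)
  finally have "sqrt (\<Sum>\<^sub>\<infinity>x. (cmod (d x * \<xi> x))\<^sup>2) \<le> sqrt (C\<^sup>2 * (\<Sum>\<^sub>\<infinity>x. (cmod (\<xi> x))\<^sup>2))"
    by (rule real_sqrt_le_mono)
  then show "l2norm (\<lambda>x. d x * \<xi> x) \<le> C * l2norm \<xi>"
    using \<open>0 \<le> C\<close> by (simp add: l2norm_def real_sqrt_mult)
qed

lemma bounded_mat_diag_mat:
  assumes "\<And>x. cmod (d x) \<le> C"
  shows "bounded_mat (diag_mat d)"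
  unfolding bounded_mat_def mat_apply_diag_mat diag_mat_row
  using ell2_mult_bounded[of _ d C] assms summable_on_single_point by (intro exI[of _ C]) auto

lemma l2norm_diag_mat_apply_le:
  assumes "\<And>x. cmod (d x) \<le> C" and "\<xi> \<in> ell2" and "l2norm \<xi> \<le> 1"
  shows "l2norm (mat_apply (diag_mat d) \<xi>) \<le> C"
proof -
  have "0 \<le> C" using assms(1) norm_ge_zero order_trans by blast
  with assms(3) have "C * l2norm \<xi> \<le> C" by (rule mult_left_le)
  then show ?thesis
    using ell2_mult_bounded(2)[of \<xi> d C] assms by (simp add: mat_apply_diag_mat)
qed

lemma opnorm_diag_mat_le:
  assumes "\<And>x. cmod (d x) \<le> C"
  shows "opnorm (diag_mat d) \<le> C"
  unfolding opnorm_def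
proof (rule cSup_least)
  have "(\<lambda>_. 0) \<in> {\<xi> \<in> ell2. l2norm \<xi> \<le> 1}" by (simp add: ell2_def l2norm_def)
  then show "(\<lambda>\<xi>. l2norm (mat_apply (diag_mat d) \<xi>)) ` {\<xi> \<in> ell2. l2norm \<xi> \<le> 1} \<noteq> {}" by blast
qed (use l2norm_diag_mat_apply_le[of d C] assms in blast)

lemma norm_le_opnorm_diag_mat:
  assumes "\<And>x. cmod (d x) \<le> C"
  shows "cmod (d x0) \<le> opnorm (diag_mat d)"
  unfolding opnorm_def
proof (rule cSup_upper)
  define \<delta> :: "_ \<Rightarrow> complex" where "\<delta> y = (if y = x0 then 1 else 0)" for y
  have sq\<delta>: "(\<lambda>x. (cmod (\<delta> x))\<^sup>2) = (\<lambda>x. if x = x0 then 1 else 0)"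
    by (auto simp: \<delta>_def)
  have "\<delta> \<in> ell2" "l2norm \<delta> = 1"
    by (simp_all add: ell2_def l2norm_def sq\<delta> summable_on_single_point infsum_single_point)
  moreover have "(\<lambda>x. (cmod (d x * \<delta> x))\<^sup>2) = (\<lambda>x. if x = x0 then (cmod (d x0))\<^sup>2 else 0)"
    by (auto simp: \<delta>_def)
  then have "l2norm (mat_apply (diag_mat d) \<delta>) = cmod (d x0)"
    unfolding mat_apply_diag_mat l2norm_def by (simp add: infsum_single_point)
  ultimately show "cmod (d x0) \<in> (\<lambda>\<xi>. l2norm (mat_apply (diag_mat d) \<xi>)) ` {\<xi> \<in> ell2. l2norm \<xi> \<le> 1}"
    by (metis (mono_tags, lifting) image_eqI mem_Collect_eq order_refl)
  show "bdd_above ((\<lambda>\<xi>. l2norm (mat_apply (diag_mat d) \<xi>)) ` {\<xi> \<in> ell2. l2norm \<xi> \<le> 1})"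
    using l2norm_diag_mat_apply_le[of d C] assms by (auto intro!: bdd_aboveI)
qed

lemma opnorm_diag_mat_tendsto_0:
  assumes "\<forall>\<^sub>F t in F. \<forall>x. cmod (d t x) \<le> g t" and "(g \<longlongrightarrow> 0) F"
  shows "((\<lambda>t. opnorm (diag_mat (d t))) \<longlongrightarrow> 0) F"
proof (rule tendsto_sandwich[OF _ _ tendsto_const assms(2)])
  show "\<forall>\<^sub>F t in F. 0 \<le> opnorm (diag_mat (d t))"
    using assms(1) by eventually_elim (metis norm_ge_zero norm_le_opnorm_diag_mat order_trans)
  show "\<forall>\<^sub>F t in F. opnorm (diag_mat (d t)) \<le> g t"
    using assms(1) by eventually_elim (rule opnorm_diag_mat_le, blast)
qed

lemma mat_mult_diag_mat_left: "mat_mult (diag_mat a) m = (\<lambda>x y. a x * m x y)"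
proof (intro ext)
  fix x y
  have "(\<lambda>z. diag_mat a x z * m z y) = (\<lambda>z. if z = x then a x * m x y else 0)"
    by (auto simp: diag_mat_def)
  then show "mat_mult (diag_mat a) m x y = a x * m x y"
    by (simp add: mat_mult_def infsum_single_point)
qed

lemma mat_mult_diag_mat_right: "mat_mult m (diag_mat a) = (\<lambda>x y. m x y * a y)"
proof (intro ext)
  fix x y
  have "(\<lambda>z. m x z * diag_mat a z y) = (\<lambda>z. if z = y then m x y * a y else 0)"
    by (auto simp: diag_mat_def)
  then show "mat_mult m (diag_mat a) x y = m x y * a y"
    by (simp add: mat_mult_def infsum_single_point)
qed

lemma mat_mult_diag_mat: "mat_mult (diag_mat a) (diag_mat b) = diag_mat (\<lambda>x. a x * b x)"
  by (simp add: mat_mult_diag_mat_left, auto simp: fun_eq_iff diag_mat_def)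

lemma mat_adj_diag_mat: "mat_adj (diag_mat a) = diag_mat (\<lambda>x. cnj (a x))"
  by (auto simp: fun_eq_iff mat_adj_def diag_mat_def)

lemma mat_diff_diag_mat: "mat_diff (diag_mat a) (diag_mat b) = diag_mat (\<lambda>x. a x - b x)"
  by (auto simp: fun_eq_iff mat_diff_def diag_mat_def)

lemma mat_add_diag_mat: "mat_add (diag_mat a) (diag_mat b) = diag_mat (\<lambda>x. a x + b x)"
  by (auto simp: fun_eq_iff mat_add_def diag_mat_def)

lemma mat_scale_diag_mat: "mat_scale c (diag_mat a) = diag_mat (\<lambda>x. c * a x)"
  by (auto simp: fun_eq_iff mat_scale_def diag_mat_def)

lemma mult_flow_diag_mat: "mult_flow k t (diag_mat a) = diag_mat a"
  by (auto simp: fun_eq_iff mult_flow_def diag_mat_def exp_minus field_simps)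

lemma unitary_diag_mat:
  assumes "\<And>x. cmod (a x) = 1"
  shows "unitary_mat (diag_mat a)"
proof -
  have "a x * cnj (a x) = 1" for x
    using assms[of x] by (metis complex_norm_square power_one of_real_1)
  then have "(\<lambda>x. a x * cnj (a x)) = (\<lambda>_. 1)" "(\<lambda>x. cnj (a x) * a x) = (\<lambda>_. 1)"
    by (simp_all add: mult.commute)
  moreover have "diag_mat (\<lambda>_. 1) = mat_id"
    by (auto simp: fun_eq_iff mat_id_def diag_mat_def)
  moreover have "bounded_mat (diag_mat a)"
    by (rule bounded_mat_diag_mat[of _ 1]) (simp add: assms)
  ultimately show ?thesis
    unfolding unitary_mat_def mat_adj_diag_mat mat_mult_diag_mat by simp
qed

section \<open>Diagonal operators in the uniform Roe algebra\<close>

lemma diag_mat_indicator_in_uniform_roe: "diag_mat (indicator D) \<in> uniform_roe"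
proof -
  have "partial_translation D id"
    by (auto simp: partial_translation_def)
  then have "v_op D id \<in> uniform_roe" by (rule uniform_roe.gen)
  moreover have "v_op D id = diag_mat (indicator D)"
    by (auto simp: fun_eq_iff v_op_def diag_mat_def indicator_def)
  ultimately show ?thesis by simp
qed

lemma diag_mat_in_uniform_roe_if_finite_range:
  assumes "finite (range g)"
  shows "diag_mat g \<in> uniform_roe"
proof -
  have "diag_mat g \<in> uniform_roe" if "finite V" and "range g \<subseteq> insert 0 V" for V g
    using that
  proof (induction V arbitrary: g rule: finite_induct)
    case empty
    then have "g = indicator {}" by (auto simp: fun_eq_iff)
    then show ?case by (simp only: diag_mat_indicator_in_uniform_roe)
  next
    case (insert v V)
    define g' where "g' x = (if g x = v then 0 else g x)" for x
    have "range g' \<subseteq> insert 0 V" using insert.prems by (auto simp: g'_def)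
    then have "diag_mat g' \<in> uniform_roe" by (rule insert.IH)
    moreover have "mat_scale v (diag_mat (indicator {x. g x = v})) \<in> uniform_roe"
      by (intro uniform_roe.scale diag_mat_indicator_in_uniform_roe)
    moreover have "diag_mat g = mat_add (mat_scale v (diag_mat (indicator {x. g x = v}))) (diag_mat g')"
      unfolding mat_scale_diag_mat mat_add_diag_mat
      by (rule arg_cong[where f = diag_mat]) (auto simp: g'_def)
    ultimately show ?case by (simp add: uniform_roe.add)
  qed
  with assms show ?thesis by blast
qed

definition round_grid :: "real \<Rightarrow> complex \<Rightarrow> complex" where
  "round_grid N z = Complex (\<lfloor>N * Re z\<rfloor> / N) (\<lfloor>N * Im z\<rfloor> / N)"

lemma abs_floor_div_diff_le:
  assumes "N > 0"
  shows "\<bar>\<lfloor>N * y\<rfloor> / N - y\<bar> \<le> 1 / N"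
proof -
  have "\<lfloor>N * y\<rfloor> / N \<le> y"
    using assms by (simp add: pos_divide_le_eq mult.commute)
  moreover have "y < (\<lfloor>N * y\<rfloor> + 1) / N"
    using assms by (simp add: pos_less_divide_eq mult.commute)
  ultimately show ?thesis by (simp add: add_divide_distrib)
qed

lemma norm_round_grid_diff_le:
  assumes "N > 0"
  shows "cmod (round_grid N z - z) \<le> 2 / N"
proof -
  have "cmod (round_grid N z - z) \<le> \<bar>Re (round_grid N z - z)\<bar> + \<bar>Im (round_grid N z - z)\<bar>"
    by (rule cmod_le)
  also have "\<dots> \<le> 1 / N + 1 / N"
    using abs_floor_div_diff_le[OF assms, of "Re z"] abs_floor_div_diff_le[OF assms, of "Im z"]
    by (simp add: round_grid_def)
  finally show ?thesis by simp
qed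

lemma finite_range_round_grid:
  assumes "N > 0" and "\<And>x. cmod (d x) \<le> B"
  shows "finite (range (\<lambda>x. round_grid N (d x)))"
proof -
  define K where "K = {\<lfloor>- (N * B)\<rfloor>..\<lfloor>N * B\<rfloor>}"
  have floor_bound: "\<lfloor>N * y\<rfloor> \<in> K" if "\<bar>y\<bar> \<le> B" for y
  proof -
    have "N * y \<le> N * B" "N * (- y) \<le> N * B"
      using that assms(1) by (intro mult_left_mono; simp)+
    then show ?thesis unfolding K_def by (simp add: floor_mono)
  qed
  have "range (\<lambda>x. round_grid N (d x))
      \<subseteq> (\<lambda>(i, j). Complex (i / N) (j / N)) ` (K \<times> K)"
  proof
    fix z assume "z \<in> range (\<lambda>x. round_grid N (d x))"
    then obtain x where z: "z = round_grid N (d x)" by auto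
    have "\<bar>Re (d x)\<bar> \<le> B" "\<bar>Im (d x)\<bar> \<le> B"
      using assms(2)[of x] abs_Re_le_cmod[of "d x"] abs_Im_le_cmod[of "d x"] by linarith+
    then show "z \<in> (\<lambda>(i, j). Complex (i / N) (j / N)) ` (K \<times> K)"
      unfolding z round_grid_def by (intro image_eqI[of _ _ "(\<lfloor>N * Re (d x)\<rfloor>, \<lfloor>N * Im (d x)\<rfloor>)"])
        (auto simp: floor_bound)
  qed
  then show ?thesis by (rule finite_subset) (simp add: K_def)
qed

lemma diag_mat_in_uniform_roe:
  assumes "\<And>x. cmod (d x) \<le> B"
  shows "diag_mat d \<in> uniform_roe"
proof (rule uniform_roe.lim)
  define s where "s n = diag_mat (\<lambda>x. round_grid (Suc n) (d x))" for n
  show "s n \<in> uniform_roe" for n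
    unfolding s_def
    by (rule diag_mat_in_uniform_roe_if_finite_range, rule finite_range_round_grid[of _ d B])
       (simp_all add: assms)
  show "bounded_mat (diag_mat d)" by (rule bounded_mat_diag_mat[OF assms])
  have "(\<lambda>n. 2 / real (Suc n)) \<longlonglongrightarrow> 0"
    using LIMSEQ_Suc[OF lim_const_over_n[of 2]] by simp
  then show "(\<lambda>n. opnorm (mat_diff (s n) (diag_mat d))) \<longlonglongrightarrow> 0"
    unfolding s_def mat_diff_diag_mat
    by (rule opnorm_diag_mat_tendsto_0[rotated]) (simp add: norm_round_grid_diff_le)
qed

section \<open>Close functions give inner perturbations\<close>

lemma norm_iexp_minus_1_le: "cmod (iexp y - 1) \<le> \<bar>y\<bar>"
  using iexp_approx1[of y 0] by simp

lemma norm_iexp_minus_linear_le: "cmod (iexp y - 1 - \<i> * y) \<le> y\<^sup>2 / 2"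
  using iexp_approx1[of y 1] by (simp add: diff_diff_eq power2_eq_square)

definition phase_mat :: "('a \<Rightarrow> real) \<Rightarrow> real \<Rightarrow> 'a mat" where
  "phase_mat \<phi> t = diag_mat (\<lambda>x. iexp (t * \<phi> x))"

lemma unitary_phase_mat: "unitary_mat (phase_mat \<phi> t)"
  unfolding phase_mat_def by (rule unitary_diag_mat) simp

lemma phase_mat_in_uniform_roe: "phase_mat \<phi> t \<in> uniform_roe"
  unfolding phase_mat_def by (rule diag_mat_in_uniform_roe[of _ 1]) simp

lemma phase_mat_add: "phase_mat \<phi> (t + s) = mat_mult (phase_mat \<phi> t) (mult_flow k t (phase_mat \<phi> s))"
  unfolding phase_mat_def mult_flow_diag_mat mat_mult_diag_mat
  by (simp add: distrib_right exp_add[symmetric] algebra_simps)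

lemma mult_flow_eq_conj_phase_mat:
  fixes h k :: "'a \<Rightarrow> real" and t :: real
  defines "u \<equiv> phase_mat (\<lambda>x. h x - k x) t"
  shows "mult_flow h t a = mat_mult (mat_mult u (mult_flow k t a)) (mat_adj u)"
proof (intro ext)
  fix x y
  have left: "iexp (t * (h x - k x)) * exp (\<i> * of_real (t * k x)) = exp (\<i> * of_real (t * h x))"
    by (simp add: exp_add[symmetric] algebra_simps)
  have right: "exp (- \<i> * of_real (t * k y)) * cnj (iexp (t * (h y - k y))) = exp (- \<i> * of_real (t * h y))"
    by (simp add: exp_cnj exp_add[symmetric] algebra_simps)
  have "mat_mult (mat_mult u (mult_flow k t a)) (mat_adj u) x y
      = (iexp (t * (h x - k x)) * exp (\<i> * of_real (t * k x))) * a x y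
        * (exp (- \<i> * of_real (t * k y)) * cnj (iexp (t * (h y - k y))))"
    unfolding u_def phase_mat_def mat_mult_diag_mat_left mat_adj_diag_mat mat_mult_diag_mat_right
    by (simp add: mult_flow_def mult_ac)
  also have "\<dots> = mult_flow h t a x y"
    by (simp only: left right mult_flow_def)
  finally show "mult_flow h t a x y = mat_mult (mat_mult u (mult_flow k t a)) (mat_adj u) x y" ..
qed

lemma norm_continuous_phase_mat:
  assumes "\<And>x. \<bar>\<phi> x\<bar> \<le> M"
  shows "norm_continuous (phase_mat \<phi>)"
  unfolding norm_continuous_def
proof
  fix t
  have "cmod (iexp (s * \<phi> x) - iexp (t * \<phi> x)) \<le> \<bar>s - t\<bar> * M" for s x
  proof -
    have "iexp (s * \<phi> x) - iexp (t * \<phi> x) = iexp (t * \<phi> x) * (iexp ((s - t) * \<phi> x) - 1)"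
      by (simp add: exp_add[symmetric] algebra_simps)
    then have "cmod (iexp (s * \<phi> x) - iexp (t * \<phi> x)) = cmod (iexp ((s - t) * \<phi> x) - 1)"
      by (simp add: norm_mult)
    also have "\<dots> \<le> \<bar>s - t\<bar> * \<bar>\<phi> x\<bar>"
      using norm_iexp_minus_1_le[of "(s - t) * \<phi> x"] by (simp only: abs_mult)
    also have "\<dots> \<le> \<bar>s - t\<bar> * M"
      by (simp add: assms mult_left_mono)
    finally show ?thesis .
  qed
  moreover have "((\<lambda>s. \<bar>s - t\<bar> * M) \<longlongrightarrow> \<bar>t - t\<bar> * M) (at t)"
    by (intro tendsto_intros)
  ultimately show "((\<lambda>s. opnorm (mat_diff (phase_mat \<phi> s) (phase_mat \<phi> t))) \<longlongrightarrow> 0) (at t)"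
    unfolding phase_mat_def mat_diff_diag_mat by (intro opnorm_diag_mat_tendsto_0) auto
qed

lemma norm_iexp_difference_quotient_le:
  assumes "t \<noteq> 0" and "\<bar>p\<bar> \<le> M"
  shows "cmod (of_real (1 / t) * (iexp (t * p) - 1) - \<i> * p) \<le> \<bar>t\<bar> * M\<^sup>2 / 2"
proof -
  have "of_real (1 / t) * (iexp (t * p) - 1) - \<i> * p = of_real (1 / t) * (iexp (t * p) - 1 - \<i> * (t * p))"
    using assms(1) by (simp add: field_simps)
  then have "cmod (of_real (1 / t) * (iexp (t * p) - 1) - \<i> * p) = cmod (iexp (t * p) - 1 - \<i> * (t * p)) / \<bar>t\<bar>"
    by (simp add: norm_mult norm_divide)
  also have "\<dots> \<le> (t * p)\<^sup>2 / 2 / \<bar>t\<bar>"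
    by (intro divide_right_mono norm_iexp_minus_linear_le) simp
  also have "\<dots> = \<bar>t\<bar> * p\<^sup>2 / 2"
    using assms(1) by (simp add: power2_eq_square abs_mult field_simps)
  also have "\<dots> \<le> \<bar>t\<bar> * M\<^sup>2 / 2"
  proof -
    have "p\<^sup>2 \<le> M\<^sup>2"
      using assms(2) by (metis abs_ge_zero power2_abs power_mono)
    then show ?thesis by (intro divide_right_mono mult_left_mono) auto
  qed
  finally show ?thesis .
qed

lemma norm_differentiable_at_0_phase_mat:
  assumes "\<And>x. \<bar>\<phi> x\<bar> \<le> M"
  shows "norm_differentiable_at_0 (phase_mat \<phi>)"
proof -
  define D where "D = diag_mat (\<lambda>x. \<i> * \<phi> x)"
  have "bounded_mat D"
    unfolding D_def by (rule bounded_mat_diag_mat[of _ M]) (simp add: norm_mult assms)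
  have "\<forall>\<^sub>F t in at 0. \<forall>x. cmod (of_real (1 / t) * (iexp (t * \<phi> x) - 1) - \<i> * \<phi> x) \<le> \<bar>t\<bar> * M\<^sup>2 / 2"
    using eventually_neq_at_within[of 0 0 UNIV]
    by eventually_elim (intro allI norm_iexp_difference_quotient_le assms)
  moreover have "((\<lambda>t. \<bar>t\<bar> * M\<^sup>2 / 2) \<longlongrightarrow> \<bar>0\<bar> * M\<^sup>2 / 2) (at (0::real))"
    by (intro tendsto_intros) simp
  ultimately have "((\<lambda>t. opnorm (mat_diff (mat_scale (of_real (1 / t)) (mat_diff (phase_mat \<phi> t) (phase_mat \<phi> 0))) D)) \<longlongrightarrow> 0) (at 0)"
    unfolding phase_mat_def D_def mat_diff_diag_mat mat_scale_diag_mat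
    by (intro opnorm_diag_mat_tendsto_0) auto
  with \<open>bounded_mat D\<close> show ?thesis
    unfolding norm_differentiable_at_0_def by blast
qed

lemma inner_perturbation_if_bdd_diff:
  assumes "bdd_above (range (\<lambda>x. \<bar>h x - k x\<bar>))"
  shows "inner_perturbation uniform_roe (mult_flow h) (mult_flow k)"
proof -
  obtain M where M: "\<And>x. \<bar>h x - k x\<bar> \<le> M"
    using assms by (auto simp: bdd_above_def)
  let ?u = "phase_mat (\<lambda>x. h x - k x)"
  have "is_cocycle uniform_roe (mult_flow k) ?u"
    unfolding is_cocycle_def
    using phase_mat_in_uniform_roe unitary_phase_mat norm_continuous_phase_mat[of "\<lambda>x. h x - k x" M] M phase_mat_add
    by blast
  moreover have "perturbed_by uniform_roe (mult_flow h) (mult_flow k) ?u"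
    unfolding perturbed_by_def using mult_flow_eq_conj_phase_mat by blast
  ultimately show ?thesis
    unfolding inner_perturbation_def using norm_differentiable_at_0_phase_mat[of "\<lambda>x. h x - k x" M] M by blast
qed

section \<open>Cocycle perturbations force closeness\<close>

lemma cocycle_perturbation_if_inner_perturbation:
  "inner_perturbation A \<rho> \<sigma> \<Longrightarrow> cocycle_perturbation A \<rho> \<sigma>"
  unfolding inner_perturbation_def cocycle_perturbation_def by blast

lemma mult_flow_matrix_unit:
  "mult_flow k t (v_op {y} (\<lambda>_. x)) = (\<lambda>a b. if a = x \<and> b = y then iexp (t * (k x - k y)) else 0)"
  by (auto simp: fun_eq_iff mult_flow_def v_op_def exp_add[symmetric] algebra_simps)

lemma conj_matrix_unit:
  "mat_mult (mat_mult m (\<lambda>a b. if a = x \<and> b = y then c else 0)) (mat_adj m)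
     = (\<lambda>a b. m a x * c * cnj (m b y))"
proof -
  have "mat_mult m (\<lambda>a b. if a = x \<and> b = y then c else 0) = (\<lambda>a b. if b = y then m a x * c else 0)"
  proof (intro ext)
    fix a b
    have "(\<lambda>z. m a z * (if z = x \<and> b = y then c else 0)) = (\<lambda>z. if z = x then (if b = y then m a x * c else 0) else 0)"
      by auto
    then show "mat_mult m (\<lambda>a b. if a = x \<and> b = y then c else 0) a b = (if b = y then m a x * c else 0)"
      unfolding mat_mult_def by (simp add: infsum_single_point)
  qed
  moreover have "mat_mult (\<lambda>a b. if b = y then m a x * c else 0) (mat_adj m) = (\<lambda>a b. m a x * c * cnj (m b y))"
  proof (intro ext)
    fix a b
    have "(\<lambda>z. (if z = y then m a x * c else 0) * mat_adj m z b) = (\<lambda>z. if z = y then m a x * c * cnj (m b y) else 0)"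
      by (auto simp: mat_adj_def)
    then show "mat_mult (\<lambda>a b. if b = y then m a x * c else 0) (mat_adj m) a b = m a x * c * cnj (m b y)"
      unfolding mat_mult_def by (simp add: infsum_single_point)
  qed
  ultimately show ?thesis by simp
qed

lemma perturbed_by_mult_flow_entries:
  assumes "perturbed_by uniform_roe (mult_flow h) (mult_flow k) u"
  shows "u t a x * cnj (u t b y)
    = (if a = x \<and> b = y then iexp (t * ((h x - k x) - (h y - k y))) else 0)"
proof -
  have "partial_translation {y} (\<lambda>_. x)"
    by (auto simp: partial_translation_def)
  then have "v_op {y} (\<lambda>_. x) \<in> uniform_roe" by (rule uniform_roe.gen)
  with assms have "mult_flow h t (v_op {y} (\<lambda>_. x))
      = mat_mult (mat_mult (u t) (mult_flow k t (v_op {y} (\<lambda>_. x)))) (mat_adj (u t))"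
    unfolding perturbed_by_def by blast
  then have "(if a = x \<and> b = y then iexp (t * (h x - h y)) else 0)
      = u t a x * iexp (t * (k x - k y)) * cnj (u t b y)"
    unfolding mult_flow_matrix_unit conj_matrix_unit by metis
  moreover have "iexp (t * (h x - h y)) = iexp (t * (k x - k y)) * iexp (t * ((h x - k x) - (h y - k y)))"
    by (simp add: exp_add[symmetric] algebra_simps)
  ultimately show ?thesis
    by (cases "a = x \<and> b = y") (auto simp: mult_ac)
qed

lemma abs_le_pi_div_if_iexp_near_1:
  assumes "\<delta> > 0" and "\<And>s. s \<noteq> 0 \<Longrightarrow> \<bar>s\<bar> < \<delta> \<Longrightarrow> cmod (iexp (s * L) - 1) < 1"
  shows "\<bar>L\<bar> \<le> pi / \<delta>"
proof (rule ccontr)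
  assume "\<not> \<bar>L\<bar> \<le> pi / \<delta>"
  then have "pi < \<delta> * \<bar>L\<bar>"
    using assms(1) by (simp add: field_simps)
  moreover from this have "L \<noteq> 0"
    using pi_gt_zero by auto
  ultimately have "\<bar>pi / L\<bar> < \<delta>"
    using pos_divide_less_eq[of "\<bar>L\<bar>" pi \<delta>] by (simp add: abs_divide)
  then have "cmod (iexp (pi / L * L) - 1) < 1"
    using assms(2)[of "pi / L"] \<open>L \<noteq> 0\<close> by simp
  with \<open>L \<noteq> 0\<close> show False by simp
qed

lemma cmod_eq_1_if_mult_cnj_eq_1:
  assumes "z * cnj z = 1"
  shows "cmod z = 1"
proof -
  have "complex_of_real ((cmod z)\<^sup>2) = 1"
    using assms by (simp only: complex_norm_square)
  then have "(cmod z)\<^sup>2 = 1"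
    by (simp only: of_real_eq_1_iff)
  then show ?thesis
    using norm_ge_zero[of z] by (auto simp: power2_eq_1_iff)
qed

lemma bdd_above_if_norm_continuous_phases:
  fixes w :: "real \<Rightarrow> 'a \<Rightarrow> complex"
  assumes cont: "((\<lambda>s. opnorm (diag_mat (\<lambda>x. w s x - w 0 x))) \<longlongrightarrow> 0) (at 0)"
    and phase: "\<And>t x y. w t x * cnj (w t y) = iexp (t * (\<phi> x - \<phi> y))"
  shows "bdd_above (range (\<lambda>x. \<bar>\<phi> x\<bar>))"
proof -
  have unit: "cmod (w t x) = 1" for t x
    using phase[of t x x] by (intro cmod_eq_1_if_mult_cnj_eq_1) simp
  have "\<forall>\<^sub>F s in at 0. opnorm (diag_mat (\<lambda>x. w s x - w 0 x)) < 1 / 2"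
    using order_tendstoD(2)[OF cont, of "1 / 2"] by simp
  then obtain \<delta> :: real where "\<delta> > 0"
    and \<delta>: "\<And>s. s \<noteq> 0 \<Longrightarrow> \<bar>s\<bar> < \<delta> \<Longrightarrow> opnorm (diag_mat (\<lambda>x. w s x - w 0 x)) < 1 / 2"
    unfolding eventually_at by (auto simp: dist_real_def)
  have near: "cmod (w s x - w 0 x) < 1 / 2" if "s \<noteq> 0" "\<bar>s\<bar> < \<delta>" for s x
  proof -
    have "cmod (w s z - w 0 z) \<le> 2" for z
      using norm_triangle_ineq4[of "w s z" "w 0 z"] by (simp add: unit)
    then have "cmod (w s x - w 0 x) \<le> opnorm (diag_mat (\<lambda>x. w s x - w 0 x))"
      by (rule norm_le_opnorm_diag_mat)
    with \<delta>[OF that] show ?thesis by simp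
  qed
  have "cmod (iexp (s * (\<phi> x - \<phi> y)) - 1) < 1" if "s \<noteq> 0" "\<bar>s\<bar> < \<delta>" for s x y
  proof -
    have "iexp (s * (\<phi> x - \<phi> y)) - 1 = (w s x - w 0 x) * cnj (w s y) + w 0 x * cnj (w s y - w 0 y)"
      using phase[of s x y] phase[of 0 x y] by (simp add: algebra_simps)
    then have "cmod (iexp (s * (\<phi> x - \<phi> y)) - 1) \<le> cmod (w s x - w 0 x) + cmod (w s y - w 0 y)"
      using norm_triangle_ineq[of "(w s x - w 0 x) * cnj (w s y)" "w 0 x * cnj (w s y - w 0 y)"]
      by (simp add: norm_mult unit del: complex_cnj_diff)
    with near[OF that, of x] near[OF that, of y] show ?thesis by simp
  qed
  then have close: "\<bar>\<phi> x - \<phi> y\<bar> \<le> pi / \<delta>" for x y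
    by (intro abs_le_pi_div_if_iexp_near_1[OF \<open>\<delta> > 0\<close>])
  have "\<bar>\<phi> x\<bar> \<le> \<bar>\<phi> undefined\<bar> + pi / \<delta>" for x
    using close[of x undefined] by arith
  then show ?thesis by (rule bdd_aboveI2)
qed

lemma bdd_diff_if_cocycle_perturbation:
  assumes "cocycle_perturbation uniform_roe (mult_flow h) (mult_flow k)"
  shows "bdd_above (range (\<lambda>x. \<bar>h x - k x\<bar>))"
proof -
  obtain u where "is_cocycle uniform_roe (mult_flow k) u"
    and pert: "perturbed_by uniform_roe (mult_flow h) (mult_flow k) u"
    using assms unfolding cocycle_perturbation_def by blast
  define w where "w t x = u t x x" for t x
  note entries = perturbed_by_mult_flow_entries[OF pert]
  have "u t = diag_mat (w t)" for t
  proof (intro ext)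
    fix a x
    have "u t x x * cnj (u t x x) = 1"
      using entries[of t x x x x] by simp
    moreover have "a \<noteq> x \<Longrightarrow> u t a x * cnj (u t x x) = 0"
      using entries[of t a x x x] by simp
    ultimately show "u t a x = diag_mat (w t) a x"
      by (auto simp: diag_mat_def w_def)
  qed
  moreover have "norm_continuous u"
    using \<open>is_cocycle uniform_roe (mult_flow k) u\<close> unfolding is_cocycle_def by blast
  ultimately have "((\<lambda>s. opnorm (diag_mat (\<lambda>x. w s x - w 0 x))) \<longlongrightarrow> 0) (at 0)"
    unfolding norm_continuous_def by (simp add: mat_diff_diag_mat)
  then show ?thesis
    by (rule bdd_above_if_norm_continuous_phases) (simp add: w_def entries)
qed

theorem theorem1p4p4:
  fixes h k :: "'a::metric_space \<Rightarrow> real"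
  assumes "uniformly_locally_finite (UNIV :: 'a set)"
  shows "(bdd_above (range (\<lambda>x. \<bar>h x - k x\<bar>))
          \<longleftrightarrow> inner_perturbation uniform_roe (mult_flow h) (mult_flow k)
              \<and> inner_perturbation uniform_roe (mult_flow k) (mult_flow h))
       \<and> (inner_perturbation uniform_roe (mult_flow h) (mult_flow k)
              \<and> inner_perturbation uniform_roe (mult_flow k) (mult_flow h)
          \<longleftrightarrow> cocycle_perturbation uniform_roe (mult_flow h) (mult_flow k)
              \<and> cocycle_perturbation uniform_roe (mult_flow k) (mult_flow h))"
proof -
  let ?close = "bdd_above (range (\<lambda>x. \<bar>h x - k x\<bar>))"
  let ?inner = "inner_perturbation uniform_roe (mult_flow h) (mult_flow k)
    \<and> inner_perturbation uniform_roe (mult_flow k) (mult_flow h)"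
  let ?cocycle = "cocycle_perturbation uniform_roe (mult_flow h) (mult_flow k)
    \<and> cocycle_perturbation uniform_roe (mult_flow k) (mult_flow h)"
  have "range (\<lambda>x. \<bar>k x - h x\<bar>) = range (\<lambda>x. \<bar>h x - k x\<bar>)"
    by (simp add: abs_minus_commute)
  then have "?close \<Longrightarrow> ?inner"
    using inner_perturbation_if_bdd_diff[of h k] inner_perturbation_if_bdd_diff[of k h] by simp
  moreover have "?inner \<Longrightarrow> ?cocycle"
    using cocycle_perturbation_if_inner_perturbation by blast
  moreover have "?cocycle \<Longrightarrow> ?close"
    using bdd_diff_if_cocycle_perturbation[of h k] by simp
  ultimately show ?thesis by argo
qed

end
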